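(* Let $\Xi$ be a nonzero finite measure on $\Delta$, and let $\gamma$ and $v$ be as in the context. (i) If $a=0$ and $\mu:=\int_\Delta|u|\,\nu(\mathrm du)<\infty$, then $v(x,t)\sim xe^{-\mu t}$ as $x\to\infty$, for every $t\ge0$. (ii) If $\int_c^\infty\frac{\mathrm du}{\gamma(u)}<\infty$ for some $c>1$, then for every $t>0$ there exists a unique $v(t)\in(1,\infty)$ with $\int_{v(t)}^\infty\frac{\mathrm du}{\gamma(u)}=t$, and $\lim_{x\to\infty}v(x,t)=v(t)$. (iii) If the limit $\kappa:=\lim_{x\to\infty}x\gamma''(x)$ exists and is finite, then for every $t\ge0$ there is a function $L_t:[1,\infty)\to(0,\infty)$, slowly varying at $\infty$, such that $v(x,t)=x^{e^{-\kappa t}}L_t(x)$ for all $x\ge1$.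
   Context: Let $\Delta:=\{u=(u_1,u_2,\ldots):u_1\ge u_2\ge\cdots\ge0,\ \sum_{i\ge1}u_i\le1\}$, and for $u\in\Delta$ write $|u|:=\sum_{i\ge1}u_i$, $(u,u):=\sum_{i\ge1}u_i^2$, and $0:=(0,0,\ldots)$. Let $\Xi$ be a finite measure on $\Delta$, $a:=\Xi(\{0\})$, $\Xi_0:=\Xi-a\delta_0$, and $\nu(\mathrm du):=\Xi_0(\mathrm du)/(u,u)$ on $\Delta\setminus\{0\}$. Define $\gamma:[0,\infty)\to\mathbb R$ by $$\gamma(x):=a\frac{x(x-1)}{2}+\int_\Delta\sum_{i\ge1}\big((1-u_i)^x-1+xu_i\big)\,\nu(\mathrm du),\qquad x\ge0,$$ which is $C^\infty$ on $(0,\infty)$ and positive on $(1,\infty)$ when $\Xi\neq0$. Define $v:[1,\infty)\times[0,\infty)\to[1,\infty)$ by $v(1,t):=1$ and, for $x>1$, $t\ge0$, $v(x,t)$ is the unique number in $(1,x]$ with $\int_{v(x,t)}^x\frac{\mathrm du}{\gamma(u)}=t$. *)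

theory Defs
  imports "HOL-Probability.Probability" "HOL-Library.Landau_Symbols"
begin

text \<open>The simplex Delta of non-increasing nonnegative sequences with total mass at most 1
  (indices start at 0 instead of 1).\<close>
definition Delta :: "(nat \<Rightarrow> real) set" where
  "Delta = {u. (\<forall>i. u (Suc i) \<le> u i) \<and> (\<forall>i. 0 \<le> u i) \<and> summable u \<and> suminf u \<le> 1}"

definition Delta_M :: "(nat \<Rightarrow> real) measure" where
  "Delta_M = restrict_space (Pi\<^sub>M UNIV (\<lambda>_. borel)) Delta"

text \<open>a = Xi({0})\<close>
definition atom0 :: "(nat \<Rightarrow> real) measure \<Rightarrow> real" where
  "atom0 Xi = measure Xi {(\<lambda>_. 0)}"

definition nu :: "(nat \<Rightarrow> real) measure \<Rightarrow> (nat \<Rightarrow> real) measure" where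
  "nu Xi = density Xi (\<lambda>u. if u = (\<lambda>_. 0) then 0 else ennreal (1 / (\<Sum>i. (u i)^2)))"

text \<open>(1 - u_i)^x with the convention 0^0 = 1.\<close>
definition gamma :: "(nat \<Rightarrow> real) measure \<Rightarrow> real \<Rightarrow> real" where
  "gamma Xi x = atom0 Xi * (x * (x - 1) / 2)
     + (\<integral>u. (\<Sum>i. (if x = 0 then 1 else (1 - u i) powr x) - 1 + x * u i) \<partial>nu Xi)"

definition vfun :: "(nat \<Rightarrow> real) measure \<Rightarrow> real \<Rightarrow> real \<Rightarrow> real" where
  "vfun Xi x t = (if x \<le> 1 then 1 else
     (THE w. 1 < w \<and> w \<le> x \<and> integral {w..x} (\<lambda>u. 1 / gamma Xi u) = t))"

definition slowly_varying :: "(real \<Rightarrow> real) \<Rightarrow> bool" where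
  "slowly_varying L \<longleftrightarrow> L \<in> borel_measurable (restrict_space borel {1..}) \<and>
     (\<forall>c>0. ((\<lambda>x. L (c * x) / L x) \<longlongrightarrow> 1) at_top)"

end

theory Submission
  imports Defs
begin

text \<open>With \<open>G\<close> a primitive of \<open>1/\<gamma>\<close>, the definition of \<open>v\<close> reads \<open>G(v(x,t)) = G(x) - t\<close>,
  i.e. \<open>v(x,t) = G^-1(G(x) - t)\<close>; since \<open>\<gamma>(u) = O(u - 1)\<close> near 1, \<open>G\<close> tends to \<open>-\<infinity>\<close> there,
  so \<open>v\<close> exists for all \<open>t\<close>.

  (ii) If \<open>1/\<gamma>\<close> is integrable at \<open>\<infinity>\<close>, \<open>G\<close> increases to a finite limit \<open>G(\<infinity>)\<close>, and
  \<open>v(x,t) \<rightarrow> G^-1(G(\<infinity>) - t)\<close> by continuity of \<open>G^-1\<close>.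

  (i) If \<open>\<gamma>(x)/x \<rightarrow> \<mu>\<close>, then \<open>ln y - \<mu> G(y)\<close> has derivative \<open>(\<gamma>(y)/y - \<mu>) G'(y) = o(G'(y))\<close>.
  As \<open>G(x) - G(v(x,t)) = t\<close>, its increment between \<open>v(x,t)\<close> and \<open>x\<close> tends to 0, i.e.
  \<open>ln v(x,t) - ln x \<rightarrow> -\<mu> t\<close>.

  (iii) If \<open>x \<gamma>''(x) \<rightarrow> \<kappa>\<close>, l'Hospital's rule gives \<open>\<gamma>'(x) - \<gamma>(x)/x \<rightarrow> \<kappa>\<close>, and the same
  argument applied to \<open>ln(\<gamma>(y)/y) - \<kappa> G(y)\<close> shows \<open>(\<gamma>(v)/v) / (\<gamma>(x)/x) \<rightarrow> exp(-\<kappa> t)\<close>.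
  Since \<open>d/dx v(x,t) = \<gamma>(v)/\<gamma>(x)\<close>, the logarithmic derivative of \<open>v(x,t) / x^exp(-\<kappa> t)\<close> is
  \<open>o(1/x)\<close>, so this quotient is slowly varying.

  For the concrete \<open>\<gamma>\<close>, smoothness, positivity and the limit of \<open>\<gamma>(x)/x\<close> come from
  differentiating under the integral sign, with bounds such as
  \<open>0 \<le> (1-s)^x - 1 + x s \<le> (x\<^sup>2 - 1) s\<^sup>2 / 2\<close> that are integrable because \<open>(u,u) \<nu>(du)\<close> is finite.\<close>

lemma le_by_deriv_nonneg:
  fixes f f' :: "real \<Rightarrow> real"
  assumes "a \<le> b"
    and "\<And>x. a \<le> x \<Longrightarrow> x \<le> b \<Longrightarrow> (f has_real_derivative f' x) (at x)"
    and "\<And>x. a \<le> x \<Longrightarrow> x \<le> b \<Longrightarrow> 0 \<le> f' x"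
  shows "f a \<le> f b"
proof (rule DERIV_nonneg_imp_increasing_open[OF assms(1)])
  show "continuous_on {a..b} f"
    using assms(2) by (intro continuous_at_imp_continuous_on ballI DERIV_isCont) auto
qed (use assms in force)

lemma abs_diff_le_by_deriv:
  fixes F F' K K' :: "real \<Rightarrow> real"
  assumes "a \<le> b"
    and F: "\<And>y. a \<le> y \<Longrightarrow> y \<le> b \<Longrightarrow> (F has_real_derivative F' y) (at y)"
    and K: "\<And>y. a \<le> y \<Longrightarrow> y \<le> b \<Longrightarrow> (K has_real_derivative K' y) (at y)"
    and bound: "\<And>y. a \<le> y \<Longrightarrow> y \<le> b \<Longrightarrow> \<bar>F' y\<bar> \<le> e * K' y"
  shows "\<bar>F b - F a\<bar> \<le> e * (K b - K a)"
proof -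
  have "e * K a - F a \<le> e * K b - F b"
  proof (rule le_by_deriv_nonneg[where f="\<lambda>y. e * K y - F y" and f'="\<lambda>y. e * K' y - F' y"])
    fix y assume "a \<le> y" "y \<le> b"
    then show "((\<lambda>y. e * K y - F y) has_real_derivative e * K' y - F' y) (at y)"
      "0 \<le> e * K' y - F' y"
      using F K bound[of y] by (auto intro!: derivative_eq_intros simp: abs_le_iff)
  qed (rule \<open>a \<le> b\<close>)
  moreover have "e * K a + F a \<le> e * K b + F b"
  proof (rule le_by_deriv_nonneg[where f="\<lambda>y. e * K y + F y" and f'="\<lambda>y. e * K' y + F' y"])
    fix y assume "a \<le> y" "y \<le> b"
    then show "((\<lambda>y. e * K y + F y) has_real_derivative e * K' y + F' y) (at y)"
      "0 \<le> e * K' y + F' y"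
      using F K bound[of y] by (auto intro!: derivative_eq_intros simp: abs_le_iff)
  qed (rule \<open>a \<le> b\<close>)
  ultimately show ?thesis by (auto simp: algebra_simps abs_le_iff)
qed

lemma abs_diff_le_by_deriv_bound:
  fixes f f' :: "real \<Rightarrow> real"
  assumes "\<And>z. min x y \<le> z \<Longrightarrow> z \<le> max x y \<Longrightarrow> (f has_real_derivative f' z) (at z)"
    and "\<And>z. min x y \<le> z \<Longrightarrow> z \<le> max x y \<Longrightarrow> \<bar>f' z\<bar> \<le> B"
  shows "\<bar>f y - f x\<bar> \<le> B * \<bar>y - x\<bar>"
proof -
  have "\<bar>f (max x y) - f (min x y)\<bar> \<le> B * (max x y - min x y)"
    by (rule abs_diff_le_by_deriv[where F'=f' and K'="\<lambda>_. 1"])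
       (use assms in \<open>auto intro!: derivative_eq_intros\<close>)
  then show ?thesis
    by (cases "x \<le> y") (auto simp: abs_minus_commute)
qed

lemma tendsto_diff_zero_by_small_deriv:
  fixes F K K' r :: "real \<Rightarrow> real" and a b :: "'a \<Rightarrow> real"
  assumes F: "eventually (\<lambda>y. (F has_real_derivative r y * K' y) (at y)) at_top"
    and K: "eventually (\<lambda>y. (K has_real_derivative K' y) (at y) \<and> 0 \<le> K' y) at_top"
    and r: "(r \<longlongrightarrow> 0) at_top"
    and a: "filterlim a at_top net"
    and ab: "eventually (\<lambda>x. a x \<le> b x \<and> K (b x) - K (a x) \<le> B) net"
  shows "((\<lambda>x. F (b x) - F (a x)) \<longlongrightarrow> 0) net"
proof (rule tendstoI)
  fix e :: real assume "e > 0"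
  define e' where "e' = e / (\<bar>B\<bar> + 1)"
  have e': "0 < e'" "e' * \<bar>B\<bar> < e"
    using \<open>e > 0\<close> by (auto simp: e'_def field_simps)
  have "eventually (\<lambda>y. \<bar>r y\<bar> < e') at_top"
    using tendstoD[OF r e'(1)] by (simp add: dist_real_def)
  with F K have "eventually (\<lambda>y. (F has_real_derivative r y * K' y) (at y)
      \<and> (K has_real_derivative K' y) (at y) \<and> 0 \<le> K' y \<and> \<bar>r y\<bar> < e') at_top"
    by eventually_elim auto
  then obtain Y where Y: "\<And>y. Y \<le> y \<Longrightarrow> (F has_real_derivative r y * K' y) (at y)
      \<and> (K has_real_derivative K' y) (at y) \<and> 0 \<le> K' y \<and> \<bar>r y\<bar> < e'"
    by (auto simp: eventually_at_top_linorder)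
  have "eventually (\<lambda>x. Y \<le> a x) net"
    using a by (auto simp: filterlim_at_top)
  with ab show "eventually (\<lambda>x. dist (F (b x) - F (a x)) 0 < e) net"
  proof eventually_elim
    case (elim x)
    have "\<bar>F (b x) - F (a x)\<bar> \<le> e' * (K (b x) - K (a x))"
    proof (rule abs_diff_le_by_deriv[where F'="\<lambda>y. r y * K' y" and K'=K'])
      fix y assume "a x \<le> y" "y \<le> b x"
      then have y: "Y \<le> y" using elim by linarith
      show "(F has_real_derivative r y * K' y) (at y)" "(K has_real_derivative K' y) (at y)"
        using Y[OF y] by auto
      show "\<bar>r y * K' y\<bar> \<le> e' * K' y"
        using Y[OF y] by (auto simp: abs_mult intro!: mult_right_mono)
    qed (use elim in auto)
    also have "\<dots> \<le> e' * \<bar>B\<bar>"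
      using elim e' by (intro mult_left_mono) auto
    finally show ?case
      using e' by (simp add: dist_real_def)
  qed
qed

lemma mono_on_tendsto_Sup:
  fixes f :: "real \<Rightarrow> real"
  assumes mono: "mono_on {a<..} f" and bdd: "bdd_above (f ` {a<..})"
  shows "(f \<longlongrightarrow> Sup (f ` {a<..})) at_top"
proof (rule order_tendstoI)
  fix z assume "z < Sup (f ` {a<..})"
  then obtain x0 where x0: "a < x0" "z < f x0"
    using bdd by (auto simp: less_cSup_iff)
  show "eventually (\<lambda>x. z < f x) at_top"
    using eventually_ge_at_top[of x0]
  proof eventually_elim
    case (elim x)
    then show ?case using x0 mono_onD[OF mono, of x0 x] by auto
  qed
next
  fix z assume z: "Sup (f ` {a<..}) < z"
  show "eventually (\<lambda>x. f x < z) at_top"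
    using eventually_gt_at_top[of a]
  proof eventually_elim
    case (elim x)
    then show ?case using z cSup_upper[OF _ bdd, of "f x"] by auto
  qed
qed

lemma mono_on_unbounded_imp_filterlim_at_top:
  fixes f :: "real \<Rightarrow> real"
  assumes mono: "mono_on {a<..} f" and unbounded: "\<not> bdd_above (f ` {a<..})"
  shows "filterlim f at_top at_top"
  unfolding filterlim_at_top
proof
  fix M
  obtain x0 where x0: "a < x0" "M < f x0"
    using unbounded by (meson bdd_aboveI2 imageI greaterThan_iff not_le)
  show "eventually (\<lambda>x. M \<le> f x) at_top"
    using eventually_ge_at_top[of x0]
  proof eventually_elim
    case (elim x)
    then show ?case using x0 mono_onD[OF mono, of x0 x] by auto
  qed
qed

lemma slowly_varying_exp_by_small_deriv:
  fixes E r :: "real \<Rightarrow> real"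
  assumes E_deriv: "eventually (\<lambda>y. (E has_real_derivative r y * (1 / y)) (at y)) at_top"
    and r: "(r \<longlongrightarrow> 0) at_top"
    and meas: "E \<in> borel_measurable borel"
  shows "slowly_varying (\<lambda>x. exp (E x))"
  unfolding slowly_varying_def
proof (intro conjI allI impI)
  show "(\<lambda>x. exp (E x)) \<in> borel_measurable (restrict_space borel {1..})"
    using meas by (intro measurable_restrict_space1) measurable
  fix c :: real assume "0 < c"
  have "((\<lambda>x. E (max x (c * x)) - E (min x (c * x))) \<longlongrightarrow> 0) at_top"
  proof (rule tendsto_diff_zero_by_small_deriv[OF E_deriv _ r, where K=ln and B="\<bar>ln c\<bar>"])
    show "eventually (\<lambda>y. (ln has_real_derivative 1 / y) (at y) \<and> 0 \<le> 1 / y) at_top"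
      using eventually_gt_at_top[of 0] by eventually_elim (auto intro!: derivative_eq_intros)
    have "eventually (\<lambda>x. min 1 c * x = min x (c * x)) at_top"
      using eventually_gt_at_top[of 0] by eventually_elim (simp add: min_mult_distrib_right)
    moreover have "filterlim (\<lambda>x. min 1 c * x) at_top at_top"
      using \<open>0 < c\<close> by (intro filterlim_tendsto_pos_mult_at_top[OF tendsto_const _ filterlim_ident]) auto
    ultimately show "filterlim (\<lambda>x. min x (c * x)) at_top at_top"
      by (simp add: filterlim_cong)
    show "eventually (\<lambda>x. min x (c * x) \<le> max x (c * x)
        \<and> ln (max x (c * x)) - ln (min x (c * x)) \<le> \<bar>ln c\<bar>) at_top"
      using eventually_gt_at_top[of 0]
      by eventually_elim (use \<open>0 < c\<close> in \<open>auto simp: ln_mult max_def min_def\<close>)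
  qed
  then have "((\<lambda>x. \<bar>E (max x (c * x)) - E (min x (c * x))\<bar>) \<longlongrightarrow> 0) at_top"
    by (rule tendsto_rabs_zero)
  moreover have "\<bar>E (max x (c * x)) - E (min x (c * x))\<bar> = \<bar>E (c * x) - E x\<bar>" for x
    by (cases "x \<le> c * x") (auto simp: max_def min_def)
  ultimately have "((\<lambda>x. E (c * x) - E x) \<longlongrightarrow> 0) at_top"
    by (simp add: tendsto_rabs_zero_iff)
  then have "((\<lambda>x. exp (E (c * x) - E x)) \<longlongrightarrow> exp 0) at_top"
    by (rule tendsto_exp)
  then show "((\<lambda>x. exp (E (c * x)) / exp (E x)) \<longlongrightarrow> 1) at_top"
    by (simp add: exp_diff)
qed

lemma has_real_derivative_integral:
  fixes M :: "'a measure" and f f' :: "real \<Rightarrow> 'a \<Rightarrow> real"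
  assumes "finite_measure M" and "a < x0" "x0 < b"
    and meas: "\<And>x. a < x \<Longrightarrow> x < b \<Longrightarrow> f x \<in> borel_measurable M"
    and meas': "f' x0 \<in> borel_measurable M"
    and int: "\<And>x. a < x \<Longrightarrow> x < b \<Longrightarrow> integrable M (f x)"
    and deriv: "\<And>u x. u \<in> space M \<Longrightarrow> a < x \<Longrightarrow> x < b \<Longrightarrow> ((\<lambda>x. f x u) has_real_derivative f' x u) (at x)"
    and bound: "\<And>u x. u \<in> space M \<Longrightarrow> a < x \<Longrightarrow> x < b \<Longrightarrow> \<bar>f' x u\<bar> \<le> B"
  shows "((\<lambda>x. \<integral>u. f x u \<partial>M) has_real_derivative (\<integral>u. f' x0 u \<partial>M)) (at x0)"
  unfolding DERIV_def tendsto_at_iff_sequentially comp_def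
proof (intro allI impI)
  fix X :: "nat \<Rightarrow> real" assume X: "\<forall>i. X i \<in> UNIV - {0}" "X \<longlonglongrightarrow> 0"
  obtain N where N: "\<And>n. N \<le> n \<Longrightarrow> \<bar>X n\<bar> < min (x0 - a) (b - x0)"
    using LIMSEQ_D[OF X(2), of "min (x0 - a) (b - x0)"] assms(2,3) by auto
  define Y where "Y n = X (n + N)" for n
  have Y: "Y n \<noteq> 0" "a < x0 + Y n" "x0 + Y n < b" for n
    using X(1) N[of "n + N"] by (auto simp: Y_def abs_less_iff)
  define q where "q n u = (f (x0 + Y n) u - f x0 u) / Y n" for n u
  have "(\<lambda>n. \<integral>u. q n u \<partial>M) \<longlonglongrightarrow> (\<integral>u. f' x0 u \<partial>M)"
  proof (rule integral_dominated_convergence[where w="\<lambda>_. B"])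
    show "q n \<in> borel_measurable M" for n
      unfolding q_def using meas[OF Y(2,3)] meas[OF assms(2,3)] by measurable
    show "integrable M (\<lambda>_. B)"
      using assms(1) by (rule finite_measure.integrable_const)
    show "AE u in M. (\<lambda>n. q n u) \<longlonglongrightarrow> f' x0 u"
    proof (rule AE_I2)
      fix u assume u: "u \<in> space M"
      have "((\<lambda>h. (f (x0 + h) u - f x0 u) / h) \<longlongrightarrow> f' x0 u) (at 0)"
        using deriv[OF u assms(2,3)] by (simp add: DERIV_def)
      then show "(\<lambda>n. q n u) \<longlonglongrightarrow> f' x0 u"
        unfolding tendsto_at_iff_sequentially comp_def q_def Y_def
        using X by (auto intro: LIMSEQ_ignore_initial_segment)
    qed
    show "AE u in M. norm (q n u) \<le> B" for n
    proof (rule AE_I2)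
      fix u assume u: "u \<in> space M"
      have "\<bar>f (x0 + Y n) u - f x0 u\<bar> \<le> B * \<bar>x0 + Y n - x0\<bar>"
        by (rule abs_diff_le_by_deriv_bound[where f'="\<lambda>x. f' x u"])
           (use Y[of n] assms(2,3) in \<open>auto intro!: deriv[OF u] bound[OF u]\<close>)
      then show "norm (q n u) \<le> B"
        using Y(1)[of n] by (simp add: q_def abs_divide divide_le_eq)
    qed
  qed (rule meas')
  moreover have "(\<integral>u. q n u \<partial>M) = ((\<integral>u. f (x0 + Y n) u \<partial>M) - (\<integral>u. f x0 u \<partial>M)) / Y n" for n
    using int[OF Y(2,3)] int[OF assms(2,3)] by (simp add: q_def)
  ultimately have "(\<lambda>n. ((\<integral>u. f (x0 + X (n + N)) u \<partial>M) - (\<integral>u. f x0 u \<partial>M)) / X (n + N))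
      \<longlonglongrightarrow> (\<integral>u. f' x0 u \<partial>M)"
    by (simp add: Y_def)
  then show "(\<lambda>n. ((\<integral>u. f (x0 + X n) u \<partial>M) - (\<integral>u. f x0 u \<partial>M)) / X n) \<longlonglongrightarrow> (\<integral>u. f' x0 u \<partial>M)"
    by (rule LIMSEQ_offset)
qed

section \<open>The flow of a rate function\<close>

locale flow_rate =
  fixes g :: "real \<Rightarrow> real" and C :: real
  assumes g_pos: "\<And>x. 1 < x \<Longrightarrow> 0 < g x"
    and g_le_near_1: "\<And>x. 1 < x \<Longrightarrow> x \<le> 2 \<Longrightarrow> g x \<le> C * (x - 1)"
    and isCont_g: "\<And>x. 1 < x \<Longrightarrow> isCont g x"
begin

definition h :: "real \<Rightarrow> real" where
  "h u = 1 / g u"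

definition G :: "real \<Rightarrow> real" where
  "G y = (if 2 \<le> y then integral {2..y} h else - integral {y..2} h)"

definition flow :: "real \<Rightarrow> real \<Rightarrow> real" where
  "flow x t = (if x \<le> 1 then 1 else (THE w. 1 < w \<and> w \<le> x \<and> integral {w..x} h = t))"

definition G_inv :: "real \<Rightarrow> real" where
  "G_inv s = (THE w. 1 < w \<and> G w = s)"

lemma h_pos: "1 < x \<Longrightarrow> 0 < h x"
  using g_pos by (simp add: h_def)

lemma isCont_h: "1 < x \<Longrightarrow> isCont h x"
  unfolding h_def using isCont_g g_pos
  by (intro continuous_intros) (auto simp: less_imp_neq[symmetric])

lemma continuous_on_h: "1 < a \<Longrightarrow> continuous_on {a..b} h"
  by (intro continuous_at_imp_continuous_on ballI isCont_h) auto

lemma h_integrable_on: "1 < a \<Longrightarrow> h integrable_on {a..b}"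
  by (intro integrable_continuous_interval continuous_on_h)

lemma integral_h_eq: assumes "1 < a" "a \<le> b" shows "integral {a..b} h = G b - G a"
proof -
  have combine: "integral {p..q} h + integral {q..r} h = integral {p..r} h"
    if "1 < p" "p \<le> q" "q \<le> r" for p q r
    using that h_integrable_on[of p r] by (intro Henstock_Kurzweil_Integration.integral_combine) auto
  consider "b \<le> 2" | "a \<le> 2" "2 \<le> b" | "2 \<le> a" using assms by linarith
  then show ?thesis
    by cases (use assms combine[of a b 2] combine[of a 2 b] combine[of 2 a b] in \<open>auto simp: G_def\<close>)
qed

lemma G_has_real_derivative: assumes "1 < y" shows "(G has_real_derivative h y) (at y)"
proof -
  define a where "a = (1 + y) / 2"
  have a: "1 < a" "a < y" using assms by (auto simp: a_def)
  have "((\<lambda>x. integral {a..x} h) has_real_derivative h y) (at y within {a..y+1})"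
    using a by (intro integral_has_real_derivative continuous_on_h) auto
  then have "((\<lambda>x. G a + integral {a..x} h) has_real_derivative h y) (at y)"
    using a by (subst (asm) at_within_interior) (auto intro!: derivative_eq_intros)
  then show ?thesis
    by (rule has_field_derivative_transform_within_open[where S="{a<..}"])
       (use a integral_h_eq[of a] in auto)
qed

lemma isCont_G: "1 < y \<Longrightarrow> isCont G y"
  using G_has_real_derivative DERIV_isCont by blast

lemma G_less: assumes "1 < a" "a < b" shows "G a < G b"
  using assms by (intro DERIV_pos_imp_increasing[OF assms(2)])
    (auto intro!: G_has_real_derivative h_pos exI)

lemma G_le_iff: assumes "1 < a" "1 < b" shows "G a \<le> G b \<longleftrightarrow> a \<le> b"
  using G_less[of a b] G_less[of b a] assms by (cases a b rule: linorder_cases) auto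

lemma G_eq_iff: assumes "1 < a" "1 < b" shows "G a = G b \<longleftrightarrow> a = b"
  using G_le_iff[OF assms] G_le_iff[OF assms(2,1)] by auto

lemma mono_on_G: "mono_on {1<..} G"
  by (intro mono_onI) (auto simp: G_le_iff)

lemma C_pos: "0 < C"
  using g_pos[of "3/2"] g_le_near_1[of "3/2"] by simp

lemma G_le_ln: assumes "1 < y" "y \<le> 2" shows "G y \<le> ln (y - 1) / C"
proof -
  have "G y - ln (y - 1) / C \<le> G 2 - ln (2 - 1) / C"
  proof (rule le_by_deriv_nonneg[where f="\<lambda>x. G x - ln (x - 1) / C" and f'="\<lambda>x. h x - 1 / (C * (x - 1))"])
    fix x assume x: "y \<le> x" "x \<le> 2"
    show "((\<lambda>x. G x - ln (x - 1) / C) has_real_derivative h x - 1 / (C * (x - 1))) (at x)"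
      using x assms C_pos by (auto intro!: derivative_eq_intros G_has_real_derivative simp: divide_simps)
    show "0 \<le> h x - 1 / (C * (x - 1))"
      using x assms g_le_near_1[of x] g_pos[of x] by (simp add: h_def frac_le)
  qed (use assms in auto)
  then show ?thesis by (simp add: G_def)
qed

lemma G_unbounded_below: "\<exists>y>1. y \<le> 2 \<and> G y < M"
proof -
  define m where "m = min M 0 - 1"
  define y where "y = 1 + exp (C * m)"
  have "exp (C * m) \<le> 1"
    using C_pos by (simp add: m_def mult_nonneg_nonpos)
  then have y: "1 < y" "y \<le> 2" by (auto simp: y_def)
  have "G y \<le> m"
    using G_le_ln[OF y] C_pos by (simp add: y_def)
  then show ?thesis
    using y by (intro exI[of _ y]) (auto simp: m_def)
qed

lemma G_attains: assumes "1 < y" "s \<le> G y" shows "\<exists>w>1. w \<le> y \<and> G w = s"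
proof -
  obtain y0 where y0: "1 < y0" "G y0 < s"
    using G_unbounded_below by blast
  then have "y0 \<le> y"
    using assms G_le_iff[of y y0] by auto
  then obtain w where "y0 \<le> w" "w \<le> y" "G w = s"
    using y0 assms IVT[of G y0 s y] isCont_G by auto
  then show ?thesis
    using y0 by (intro exI[of _ w]) auto
qed

lemma G_inv_G: "1 < w \<Longrightarrow> G_inv (G w) = w"
  unfolding G_inv_def by (rule the_equality) (auto simp: G_eq_iff)

lemma flow_spec:
  assumes "1 < x" "0 \<le> t"
  shows "1 < flow x t" "flow x t \<le> x" "G (flow x t) = G x - t" "flow x t = G_inv (G x - t)"
proof -
  obtain w where w: "1 < w" "w \<le> x" "G w = G x - t"
    using G_attains[of x "G x - t"] assms by auto
  have "flow x t = w"
    unfolding flow_def using assms w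
    by (auto intro!: the_equality simp: integral_h_eq G_eq_iff)
  then show "1 < flow x t" "flow x t \<le> x" "G (flow x t) = G x - t" "flow x t = G_inv (G x - t)"
    using w G_inv_G[of w] by auto
qed

lemma mono_flow: assumes "0 \<le> t" shows "mono (\<lambda>x. flow x t)"
proof (rule monoI)
  fix x y :: real assume "x \<le> y"
  then show "flow x t \<le> flow y t"
    using flow_spec[of x t] flow_spec[of y t] assms G_le_iff[of "flow x t" "flow y t"]
      G_le_iff[of x y]
    by (cases "x \<le> 1"; cases "y \<le> 1") (auto simp: flow_def)
qed

lemma G_inv_has_real_derivative:
  assumes "1 < w" shows "(G_inv has_real_derivative g w) (at (G w))"
proof -
  define d where "d = (w - 1) / 2"
  have d: "0 < d" "1 < w - d" using assms by (auto simp: d_def field_simps)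
  have "(G_inv has_real_derivative inverse (h w)) (at (G w))"
  proof (rule DERIV_inverse_function[where f=G and a="G (w - d)" and b="G (w + d)"])
    show "(G has_real_derivative h w) (at (G_inv (G w)))"
      using G_inv_G G_has_real_derivative assms by simp
    show "h w \<noteq> 0" "G (w - d) < G w" "G w < G (w + d)"
      using h_pos[OF assms] assms d by (auto intro!: G_less)
    show "isCont G_inv (G w)"
      using d by (intro isCont_inverse_function[where f=G and d=d]) (auto intro: G_inv_G isCont_G)
    fix y assume "G (w - d) < y" "y < G (w + d)"
    then obtain z where "1 < z" "G z = y"
      using G_attains[of "w + d" y] d by auto
    then show "G (G_inv y) = y"
      using G_inv_G by auto
  qed
  then show ?thesis
    using g_pos assms by (simp add: h_def)
qed

lemma flow_has_real_derivative:
  assumes "1 < x" "0 \<le> t"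
  shows "((\<lambda>x. flow x t) has_real_derivative g (flow x t) / g x) (at x)"
proof -
  have "(G_inv has_real_derivative g (flow x t)) (at (G x - t))"
    using G_inv_has_real_derivative[of "flow x t"] flow_spec[OF assms] by simp
  then have "((\<lambda>y. G_inv (G y - t)) has_real_derivative g (flow x t) * h x) (at x)"
    by (rule DERIV_chain2) (auto intro!: derivative_eq_intros G_has_real_derivative assms)
  then have "((\<lambda>y. G_inv (G y - t)) has_real_derivative g (flow x t) / g x) (at x)"
    by (simp add: h_def)
  then show ?thesis
    by (rule has_field_derivative_transform_within_open[where S="{1<..}"])
       (use assms flow_spec in auto)
qed

lemma filterlim_flow_at_top:
  assumes "filterlim G at_top at_top" "0 \<le> t"
  shows "filterlim (\<lambda>x. flow x t) at_top at_top"
  unfolding filterlim_at_top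
proof
  fix M :: real
  have "eventually (\<lambda>x. G (max M 2) + t \<le> G x \<and> 1 < x) at_top"
    using assms(1) eventually_gt_at_top[of 1] by (auto simp: filterlim_at_top intro: eventually_conj)
  then show "eventually (\<lambda>x. M \<le> flow x t) at_top"
  proof eventually_elim
    case (elim x)
    then show ?case
      using flow_spec[of x t] assms(2) G_le_iff[of "max M 2" "flow x t"] by auto
  qed
qed

lemma filterlim_G_at_top_if_le_linear:
  assumes "0 < K" "eventually (\<lambda>y. g y \<le> K * y) at_top"
  shows "filterlim G at_top at_top"
proof -
  have "eventually (\<lambda>y. g y \<le> K * y \<and> 2 \<le> y) at_top"
    using assms(2) eventually_ge_at_top[of 2] by eventually_elim auto
  then obtain X where X: "2 \<le> X" "\<And>y. X \<le> y \<Longrightarrow> g y \<le> K * y"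
    by (auto simp: eventually_at_top_linorder)
  have "G X - ln X / K \<le> G x - ln x / K" if "X \<le> x" for x
  proof (rule le_by_deriv_nonneg[where f="\<lambda>y. G y - ln y / K" and f'="\<lambda>y. h y - 1 / (K * y)"])
    fix y assume y: "X \<le> y" "y \<le> x"
    show "((\<lambda>y. G y - ln y / K) has_real_derivative h y - 1 / (K * y)) (at y)"
      using y X assms by (auto intro!: derivative_eq_intros G_has_real_derivative simp: divide_simps)
    show "0 \<le> h y - 1 / (K * y)"
      using y X g_pos[of y] by (simp add: h_def frac_le)
  qed (use that in auto)
  moreover have "filterlim (\<lambda>x. G X - ln X / K + (1 / K) * ln x) at_top at_top"
    using assms(1) by (intro filterlim_tendsto_add_at_top[OF tendsto_const]
        filterlim_tendsto_pos_mult_at_top[OF tendsto_const] ln_at_top) auto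
  ultimately show ?thesis
    by (elim filterlim_at_top_mono) (auto intro: eventually_mono[OF eventually_ge_at_top[of X]] simp: algebra_simps)
qed

lemma eventually_G_has_real_derivative: "eventually (\<lambda>y. (G has_real_derivative h y) (at y) \<and> 0 \<le> h y) at_top"
  using eventually_gt_at_top[of 1]
  by eventually_elim (auto intro: G_has_real_derivative less_imp_le h_pos)

lemma tendsto_diff_along_flow:
  assumes F: "eventually (\<lambda>y. (F has_real_derivative r y * h y) (at y)) at_top"
    and r: "(r \<longlongrightarrow> 0) at_top" and "filterlim G at_top at_top" "0 \<le> t"
  shows "((\<lambda>x. F x - F (flow x t)) \<longlongrightarrow> 0) at_top"
proof (rule tendsto_diff_zero_by_small_deriv[OF F eventually_G_has_real_derivative r])
  show "filterlim (\<lambda>x. flow x t) at_top at_top"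
    using assms(3,4) by (rule filterlim_flow_at_top)
  show "eventually (\<lambda>x. flow x t \<le> x \<and> G x - G (flow x t) \<le> t) at_top"
    using eventually_gt_at_top[of 1]
  proof eventually_elim
    case (elim x)
    then show ?case
      using flow_spec(1-3)[of x t] assms(4) by auto
  qed
qed

lemma h_has_integral_tail:
  assumes G_lim: "(G \<longlongrightarrow> S) at_top" and "1 < w"
  shows "(h has_integral (S - G w)) {w..}"
proof (rule has_integral_to_inf)
  show "h integrable_on {w..y}" for y
    using assms(2) by (rule h_integrable_on)
  show "0 \<le> h y" if "w \<le> y" for y
    using h_pos[of y] that assms(2) by auto
  have "eventually (\<lambda>y. G y - G w = integral {w..y} h) at_top"
    using eventually_ge_at_top[of w] by eventually_elim (use assms integral_h_eq in auto)
  then show "((\<lambda>y. integral {w..y} h) \<longlongrightarrow> S - G w) at_top"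
    using G_lim by (auto intro: Lim_transform_eventually tendsto_diff)
qed

lemma G_tendsto_Sup_if_integrable:
  assumes "1 < c" "h integrable_on {c..}"
  shows "(G \<longlongrightarrow> Sup (G ` {1<..})) at_top"
proof -
  have "G y \<le> G c + integral {c..} h" if "1 < y" for y
  proof -
    have "integral {c..max c y} h \<le> integral {c..} h"
      using assms h_pos by (intro integral_subset_le h_integrable_on) (auto intro: less_imp_le)
    moreover have "G y \<le> G (max c y)"
      using G_le_iff[of y "max c y"] assms(1) that by auto
    ultimately show ?thesis
      using integral_h_eq[of c "max c y"] assms(1) by auto
  qed
  then have "bdd_above (G ` {1<..})"
    by (intro bdd_aboveI2[where M="G c + integral {c..} h"]) auto
  with mono_on_G show ?thesis
    by (rule mono_on_tendsto_Sup)
qed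

lemma flow_tendsto_if_integrable:
  assumes "\<exists>c>1. h integrable_on {c..}" "0 < t"
  defines "P \<equiv> \<lambda>w. 1 < w \<and> h integrable_on {w..} \<and> integral {w..} h = t"
  shows "(\<exists>!w. P w) \<and> ((\<lambda>x. flow x t) \<longlongrightarrow> (THE w. P w)) at_top"
proof -
  define S where "S = Sup (G ` {1<..})"
  have G_lim: "(G \<longlongrightarrow> S) at_top"
    unfolding S_def using assms(1) G_tendsto_Sup_if_integrable by blast
  have P_iff: "P w \<longleftrightarrow> 1 < w \<and> G w = S - t" for w
  proof (cases "1 < w")
    case True
    then have "h integrable_on {w..}" "integral {w..} h = S - G w"
      using h_has_integral_tail[OF G_lim True] by (auto dest: integral_unique)
    then show ?thesis
      unfolding P_def by auto
  qed (simp add: P_def)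
  have "eventually (\<lambda>x. S - t < G x \<and> 1 < x) at_top"
    using order_tendstoD(1)[OF G_lim, of "S - t"] eventually_gt_at_top[of 1] \<open>0 < t\<close>
    by (auto intro: eventually_conj)
  then obtain y where "S - t < G y" "1 < y"
    by (auto simp: eventually_at_top_linorder)
  then obtain w where w: "1 < w" "G w = S - t"
    using G_attains[of y "S - t"] by auto
  have P_unique: "P w' \<Longrightarrow> w' = w" for w'
    using w G_eq_iff[of w' w] by (simp add: P_iff)
  have "P w"
    using w by (simp add: P_iff)
  then have ex1: "\<exists>!w. P w" and the: "(THE w. P w) = w"
    using P_unique by (blast intro: ex1I, blast intro: the_equality)
  have "isCont G_inv (G w)"
    using G_inv_has_real_derivative[OF w(1)] by (rule DERIV_isCont)
  then have "((\<lambda>x. G_inv (G x - t)) \<longlongrightarrow> G_inv (G w)) at_top"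
    by (rule isCont_tendsto_compose) (use G_lim w(2) in \<open>auto intro: tendsto_diff\<close>)
  moreover have "eventually (\<lambda>x. G_inv (G x - t) = flow x t) at_top"
    using eventually_gt_at_top[of 1]
    by eventually_elim (use assms(2) flow_spec(4) in simp)
  ultimately have "((\<lambda>x. flow x t) \<longlongrightarrow> w) at_top"
    using G_inv_G[OF w(1)] by (simp add: tendsto_cong)
  with ex1 the show ?thesis
    by simp
qed

lemma flow_asymp_equiv_linear:
  assumes lim: "((\<lambda>x. g x / x) \<longlongrightarrow> \<mu>) at_top" and "0 < \<mu>" "0 \<le> t"
  shows "(\<lambda>x. flow x t) \<sim>[at_top] (\<lambda>x. x * exp (- \<mu> * t))"
proof -
  have "eventually (\<lambda>x. g x / x < \<mu> + 1 \<and> 0 < x) at_top"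
    using order_tendstoD(2)[OF lim, of "\<mu> + 1"] eventually_gt_at_top[of 0] by (auto intro: eventually_conj)
  then have "eventually (\<lambda>x. g x \<le> (\<mu> + 1) * x) at_top"
    by eventually_elim (auto simp: divide_less_eq)
  then have "filterlim G at_top at_top"
    using \<open>0 < \<mu>\<close> by (intro filterlim_G_at_top_if_le_linear[of "\<mu> + 1"]) auto
  then have "((\<lambda>x. (ln x - \<mu> * G x) - (ln (flow x t) - \<mu> * G (flow x t))) \<longlongrightarrow> 0) at_top"
  proof (rule tendsto_diff_along_flow[where r="\<lambda>y. g y / y - \<mu>", rotated 2])
    show "eventually (\<lambda>y. ((\<lambda>y. ln y - \<mu> * G y) has_real_derivative (g y / y - \<mu>) * h y) (at y)) at_top"
      using eventually_gt_at_top[of 1]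
    proof eventually_elim
      case (elim y)
      with g_pos[of y] show ?case
        by (auto intro!: derivative_eq_intros G_has_real_derivative simp: h_def field_simps)
    qed
    show "((\<lambda>y. g y / y - \<mu>) \<longlongrightarrow> 0) at_top"
      using tendsto_diff[OF lim tendsto_const[of \<mu>]] by simp
  qed (rule \<open>0 \<le> t\<close>)
  moreover have "eventually (\<lambda>x. (ln x - \<mu> * G x) - (ln (flow x t) - \<mu> * G (flow x t))
      = ln (x / flow x t) - \<mu> * t) at_top"
    using eventually_gt_at_top[of 1]
  proof eventually_elim
    case (elim x)
    then show ?case
      using flow_spec(1-3)[of x t] \<open>0 \<le> t\<close> by (simp add: ln_div right_diff_distrib)
  qed
  ultimately have "((\<lambda>x. ln (x / flow x t) - \<mu> * t) \<longlongrightarrow> 0) at_top"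
    by (rule Lim_transform_eventually)
  then have "((\<lambda>x. exp (- (ln (x / flow x t) - \<mu> * t))) \<longlongrightarrow> 1) at_top"
    using tendsto_exp[OF tendsto_minus] by fastforce
  moreover have "eventually (\<lambda>x. exp (- (ln (x / flow x t) - \<mu> * t)) = flow x t / (x * exp (- \<mu> * t))) at_top"
    using eventually_gt_at_top[of 1]
  proof eventually_elim
    case (elim x)
    then show ?case
      using flow_spec(1-3)[of x t] \<open>0 \<le> t\<close> by (simp add: exp_diff exp_minus ln_div exp_add field_simps)
  qed
  ultimately show ?thesis
    by (intro asymp_equivI') (rule Lim_transform_eventually)
qed

end

section \<open>Regular variation of the flow\<close>

locale flow_rate_C2 = flow_rate +
  fixes g' g'' :: "real \<Rightarrow> real" and \<kappa> :: real
  assumes g_has_real_derivative: "eventually (\<lambda>x. (g has_real_derivative g' x) (at x)) at_top"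
    and g'_has_real_derivative: "eventually (\<lambda>x. (g' has_real_derivative g'' x) (at x)) at_top"
    and x_g''_tendsto: "((\<lambda>x. x * g'' x) \<longlongrightarrow> \<kappa>) at_top"
begin

lemma tendsto_g'_minus_g_over_x: "((\<lambda>x. (x * g' x - g x) / x) \<longlongrightarrow> \<kappa>) at_top"
proof (rule lhospital_at_top_at_top[where g="\<lambda>x. x" and g'="\<lambda>_. 1"])
  show "eventually (\<lambda>x. ((\<lambda>x. x * g' x - g x) has_real_derivative x * g'' x) (at x)) at_top"
    using g_has_real_derivative g'_has_real_derivative by eventually_elim (auto intro!: derivative_eq_intros)
  show "eventually (\<lambda>x. ((\<lambda>x. x) has_real_derivative 1) (at x)) at_top"
    by (simp add: DERIV_ident)
  show "((\<lambda>x. x * g'' x / 1) \<longlongrightarrow> \<kappa>) at_top"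
    using x_g''_tendsto by simp
qed (auto simp: filterlim_ident)

definition defect :: "real \<Rightarrow> real" where
  "defect y = ln (g y) - ln y - \<kappa> * G y"

lemma eventually_defect_has_real_derivative:
  "eventually (\<lambda>y. (defect has_real_derivative ((y * g' y - g y) / y - \<kappa>) * h y) (at y)) at_top"
  using g_has_real_derivative eventually_gt_at_top[of 1]
proof eventually_elim
  case (elim y)
  with g_pos[of y] show ?case
    unfolding defect_def
    by (auto intro!: derivative_eq_intros G_has_real_derivative simp: h_def field_simps)
qed

text \<open>If \<open>G\<close> were bounded, \<open>ln (g y / y) = defect y + \<kappa> G y\<close> would stay bounded as well, since
  \<open>defect\<close> varies by at most the variation of \<open>G\<close> far out.\<close>
lemma g_le_linear_if_G_bounded:
  assumes M: "\<And>y. 1 < y \<Longrightarrow> G y \<le> M"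
  shows "\<exists>K>0. eventually (\<lambda>y. g y \<le> K * y) at_top"
proof -
  have "eventually (\<lambda>y. (defect has_real_derivative ((y * g' y - g y) / y - \<kappa>) * h y) (at y)
      \<and> (G has_real_derivative h y) (at y) \<and> 0 \<le> h y \<and> \<bar>(y * g' y - g y) / y - \<kappa>\<bar> < 1 \<and> 1 < y) at_top"
    using eventually_defect_has_real_derivative eventually_G_has_real_derivative
      tendstoD[OF tendsto_g'_minus_g_over_x zero_less_one] eventually_gt_at_top[of 1]
    by eventually_elim (auto simp: dist_real_def)
  then obtain X where X: "\<And>y. X \<le> y \<Longrightarrow> (defect has_real_derivative ((y * g' y - g y) / y - \<kappa>) * h y) (at y)
      \<and> (G has_real_derivative h y) (at y) \<and> 0 \<le> h y \<and> \<bar>(y * g' y - g y) / y - \<kappa>\<bar> < 1 \<and> 1 < y"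
    by (auto simp: eventually_at_top_linorder)
  define B where "B = defect X + (M - G X) + \<bar>\<kappa>\<bar> * (\<bar>G X\<bar> + \<bar>M\<bar>)"
  have "g y \<le> exp B * y" if "X \<le> y" for y
  proof -
    have "\<bar>defect y - defect X\<bar> \<le> 1 * (G y - G X)"
    proof (rule abs_diff_le_by_deriv)
      fix z assume "X \<le> z"
      then have "\<bar>(z * g' z - g z) / z - \<kappa>\<bar> * h z \<le> 1 * h z"
        using X[of z] by (intro mult_right_mono) auto
      with X[OF \<open>X \<le> z\<close>]
      show "(defect has_real_derivative ((z * g' z - g z) / z - \<kappa>) * h z) (at z)"
        "(G has_real_derivative h z) (at z)" "\<bar>((z * g' z - g z) / z - \<kappa>) * h z\<bar> \<le> 1 * h z"
        by (auto simp: abs_mult)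
    qed (rule that)
    then have "defect y \<le> defect X + (G y - G X)"
      by (simp add: abs_le_iff)
    moreover have G_bounds: "G X \<le> G y" "G y \<le> M"
      using G_le_iff[of X y] X[of X] X[of y] M[of y] that by auto
    moreover have "\<kappa> * G y \<le> \<bar>\<kappa>\<bar> * (\<bar>G X\<bar> + \<bar>M\<bar>)"
    proof -
      have "\<kappa> * G y \<le> \<bar>\<kappa>\<bar> * \<bar>G y\<bar>"
        by (simp flip: abs_mult)
      also have "\<dots> \<le> \<bar>\<kappa>\<bar> * (\<bar>G X\<bar> + \<bar>M\<bar>)"
        using G_bounds by (intro mult_left_mono) auto
      finally show ?thesis .
    qed
    moreover have pos: "0 < y" "0 < g y"
      using X[of y] that g_pos[of y] by auto
    then have "ln (g y / y) = defect y + \<kappa> * G y"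
      by (simp add: defect_def ln_div)
    ultimately have "ln (g y / y) \<le> B"
      unfolding B_def by linarith
    then have "g y / y \<le> exp B"
      using pos by (metis divide_pos_pos exp_le_cancel_iff exp_ln)
    then show ?thesis
      using pos by (simp add: divide_le_eq)
  qed
  then show ?thesis
    by (intro exI[of _ "exp B"]) (auto intro: eventually_at_top_linorderI)
qed

lemma filterlim_G_at_top: "filterlim G at_top at_top"
proof (cases "bdd_above (G ` {1<..})")
  case False
  with mono_on_G show ?thesis
    by (rule mono_on_unbounded_imp_filterlim_at_top)
next
  case True
  then obtain M where "\<And>y. 1 < y \<Longrightarrow> G y \<le> M"
    by (auto simp: bdd_above_def)
  then obtain K where "0 < K" "eventually (\<lambda>y. g y \<le> K * y) at_top"
    using g_le_linear_if_G_bounded by blast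
  then show ?thesis
    by (rule filterlim_G_at_top_if_le_linear)
qed

lemma flow_ratio_tendsto:
  assumes "0 \<le> t"
  shows "((\<lambda>x. (g (flow x t) / flow x t) / (g x / x)) \<longlongrightarrow> exp (- \<kappa> * t)) at_top"
proof -
  have "((\<lambda>y. (y * g' y - g y) / y - \<kappa>) \<longlongrightarrow> 0) at_top"
    using tendsto_diff[OF tendsto_g'_minus_g_over_x tendsto_const[of \<kappa>]] by simp
  with eventually_defect_has_real_derivative
  have "((\<lambda>x. defect x - defect (flow x t)) \<longlongrightarrow> 0) at_top"
    using filterlim_G_at_top assms by (rule tendsto_diff_along_flow)
  then have "((\<lambda>x. exp (- (defect x - defect (flow x t)) - \<kappa> * t)) \<longlongrightarrow> exp (- 0 - \<kappa> * t)) at_top"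
    by (intro tendsto_intros)
  moreover have "eventually (\<lambda>x. exp (- (defect x - defect (flow x t)) - \<kappa> * t)
      = (g (flow x t) / flow x t) / (g x / x)) at_top"
    using eventually_gt_at_top[of 1]
  proof eventually_elim
    case (elim x)
    then have "1 < flow x t" "G (flow x t) = G x - t"
      using flow_spec(1-3)[of x t] assms by auto
    moreover have "0 < x" "0 < flow x t" "0 < g x" "0 < g (flow x t)"
      using elim \<open>1 < flow x t\<close> g_pos by auto
    ultimately have "- (defect x - defect (flow x t)) - \<kappa> * t = ln ((g (flow x t) / flow x t) / (g x / x))"
      by (simp add: defect_def ln_div ln_mult right_diff_distrib)
    with elim g_pos[of x] g_pos[of "flow x t"] \<open>1 < flow x t\<close> show ?case
      by simp
  qed
  ultimately show ?thesis
    by (simp add: Lim_transform_eventually)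
qed

lemma flow_eq_powr_slowly_varying:
  assumes "0 \<le> t"
  shows "\<exists>L. (\<forall>x\<ge>1. 0 < L x) \<and> slowly_varying L \<and> (\<forall>x\<ge>1. flow x t = x powr exp (- \<kappa> * t) * L x)"
proof -
  define \<alpha> where "\<alpha> = exp (- \<kappa> * t)"
  define E where "E x = ln (flow x t) - \<alpha> * ln x" for x
  have "slowly_varying (\<lambda>x. exp (E x))"
  proof (rule slowly_varying_exp_by_small_deriv[where r="\<lambda>y. (g (flow y t) / flow y t) / (g y / y) - \<alpha>"])
    show "eventually (\<lambda>y. (E has_real_derivative
        ((g (flow y t) / flow y t) / (g y / y) - \<alpha>) * (1 / y)) (at y)) at_top"
      using eventually_gt_at_top[of 1]
    proof eventually_elim
      case (elim y)
      moreover have "1 < flow y t" "0 < g y" "0 < g (flow y t)"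
        using elim flow_spec(1)[OF elim assms] g_pos by auto
      ultimately show ?case
        unfolding E_def
        by (auto intro!: derivative_eq_intros flow_has_real_derivative assms simp: field_simps)
    qed
    show "((\<lambda>y. (g (flow y t) / flow y t) / (g y / y) - \<alpha>) \<longlongrightarrow> 0) at_top"
      using tendsto_diff[OF flow_ratio_tendsto[OF assms] tendsto_const[of \<alpha>]] by (simp add: \<alpha>_def)
    show "E \<in> borel_measurable borel"
      using borel_measurable_mono[OF mono_flow[OF assms]] unfolding E_def by measurable
  qed
  moreover have "flow x t = x powr \<alpha> * exp (E x)" if "1 \<le> x" for x
  proof -
    have "0 < flow x t"
      using flow_spec(1)[of x t] assms that by (cases "x = 1") (auto simp: flow_def)
    then show ?thesis
      using that by (simp add: E_def powr_def exp_diff)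
  qed
  ultimately show ?thesis
    unfolding \<alpha>_def by (intro exI[of _ "\<lambda>x. exp (E x)"]) auto
qed

end

section \<open>The rate function \<open>\<gamma>\<close>\<close>

text \<open>At \<open>s = 1\<close> these formulas remain correct derivatives because \<open>0 powr x = 0\<close> and
  \<open>ln 0 = 0\<close>.\<close>
definition eta :: "real \<Rightarrow> real \<Rightarrow> real" where
  "eta x s = (if x = 0 then 1 else (1 - s) powr x) - 1 + x * s"

definition eta1 :: "real \<Rightarrow> real \<Rightarrow> real" where
  "eta1 x s = ln (1 - s) * (1 - s) powr x + s"

definition eta2 :: "real \<Rightarrow> real \<Rightarrow> real" where
  "eta2 x s = (ln (1 - s))\<^sup>2 * (1 - s) powr x"

lemma eta_has_real_derivative:
  assumes "0 \<le> s" "s \<le> 1" "0 < y"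
  shows "((\<lambda>x. eta x s) has_real_derivative eta1 y s) (at y)"
proof (cases "s = 1")
  case True
  have "((\<lambda>x. x - 1) has_real_derivative eta1 y s) (at y)"
    using True by (auto intro!: derivative_eq_intros simp: eta1_def)
  then show ?thesis
    by (rule has_field_derivative_transform_within_open[where S="{0<..}"])
       (use assms True in \<open>auto simp: eta_def\<close>)
next
  case False
  then have "0 < 1 - s" using assms by auto
  then have "((\<lambda>x. (1 - s) powr x - 1 + x * s) has_real_derivative eta1 y s) (at y)"
    by (auto intro!: derivative_eq_intros simp: eta1_def powr_def)
  then show ?thesis
    by (rule has_field_derivative_transform_within_open[where S="{0<..}"])
       (use assms in \<open>auto simp: eta_def\<close>)
qed

lemma eta1_has_real_derivative:
  assumes "0 \<le> s" "s \<le> 1"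
  shows "((\<lambda>x. eta1 x s) has_real_derivative eta2 y s) (at y)"
proof (cases "s = 1")
  case True
  then show ?thesis by (simp add: eta1_def eta2_def)
next
  case False
  then have "0 < 1 - s" using assms by auto
  then show ?thesis
    unfolding eta1_def eta2_def by (auto intro!: derivative_eq_intros simp: powr_def power2_eq_square)
qed

lemma powr_ge_Bernoulli:
  fixes c y :: real
  assumes "0 < c" "c \<le> 1" "1 \<le> y"
  shows "1 - y * (1 - c) \<le> c powr y"
proof -
  have "- (c powr y - y * c) \<le> - (1 powr y - y * 1)"
  proof (rule le_by_deriv_nonneg[where f="\<lambda>z. - (z powr y - y * z)" and f'="\<lambda>z. y - y * z powr (y - 1)"])
    fix z assume z: "c \<le> z" "z \<le> 1"
    show "((\<lambda>z. - (z powr y - y * z)) has_real_derivative y - y * z powr (y - 1)) (at z)"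
      using z assms by (auto intro!: derivative_eq_intros simp: algebra_simps)
    have "z powr (y - 1) \<le> 1"
      using z assms by (intro powr_le1) auto
    then show "0 \<le> y - y * z powr (y - 1)"
      using assms by (simp add: mult_left_le)
  qed (use assms in auto)
  then show ?thesis by (simp add: algebra_simps)
qed

lemma mult_ln_self_ge: "0 < c \<Longrightarrow> - (1 - c) \<le> c * ln (c::real)"
  using ln_le_minus_one[of "1 / c"] mult_left_mono[of "- ln c" "1 / c - 1" c]
  by (simp add: ln_div algebra_simps)

lemma eta1_bounds:
  assumes s: "0 \<le> s" "s \<le> 1" and y: "1 \<le> y"
  shows "0 \<le> eta1 y s \<and> eta1 y s \<le> y * s\<^sup>2"
proof (cases "s = 1")
  case True then show ?thesis using y by (simp add: eta1_def)
next
  case False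
  define c where "c = 1 - s"
  have c: "0 < c" "c \<le> 1" using s False by (auto simp: c_def)
  have eta1_c: "eta1 y s = ln c * c powr y + (1 - c)"
    by (simp add: eta1_def c_def)
  have "c powr y \<le> c"
    using powr_mono'[of 1 y c] c y by simp
  then have "ln c * c \<le> ln c * c powr y"
    using c by (intro mult_left_mono_neg) auto
  then have "0 \<le> eta1 y s"
    using mult_ln_self_ge[OF c(1)] by (simp add: eta1_c mult.commute)
  moreover have "ln c * c powr y \<le> - s * c powr y"
    using ln_le_minus_one[OF c(1)] by (intro mult_right_mono) (auto simp: c_def)
  moreover have "- s * c powr y \<le> - s * (1 - y * s)"
    using powr_ge_Bernoulli[OF c y] s by (intro mult_left_mono_neg) (auto simp: c_def)
  ultimately show ?thesis
    by (simp add: eta1_c c_def algebra_simps power2_eq_square)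
qed

lemma eta1_pos:
  assumes s: "0 < s" "s \<le> 1" and y: "1 < y"
  shows "0 < eta1 y s"
proof (cases "s = 1")
  case True then show ?thesis by (simp add: eta1_def)
next
  case False
  define c where "c = 1 - s"
  have c: "0 < c" "c < 1" using s False by (auto simp: c_def)
  have "c powr y < c powr 1"
    using c y by (intro powr_less_mono') auto
  then have "ln c * c < ln c * c powr y"
    using c by (intro mult_strict_left_mono_neg) auto
  moreover have "eta1 y s = ln c * c powr y + (1 - c)"
    by (simp add: eta1_def c_def)
  ultimately show ?thesis
    using mult_ln_self_ge[of c] c mult.commute[of c "ln c"] by linarith
qed

lemma eta2_bounds:
  assumes s: "0 \<le> s" "s \<le> 1" and y: "2 \<le> y"
  shows "0 \<le> eta2 y s \<and> eta2 y s \<le> s\<^sup>2"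
proof (cases "s = 1")
  case True then show ?thesis using y by (simp add: eta2_def)
next
  case False
  define c where "c = 1 - s"
  have c: "0 < c" "c \<le> 1" using s False by (auto simp: c_def)
  have "- ln c \<le> s / c" "0 \<le> - ln c"
    using ln_le_minus_one[of "1 / c"] c by (auto simp: ln_div c_def field_simps)
  then have "(ln c)\<^sup>2 \<le> (s / c)\<^sup>2"
    using power_mono[of "- ln c" "s / c" 2] by simp
  moreover have "c powr y \<le> c\<^sup>2"
    using powr_mono'[of 2 y c] c y by (simp add: powr_realpow)
  ultimately have "(ln c)\<^sup>2 * c powr y \<le> (s / c)\<^sup>2 * c\<^sup>2"
    by (intro mult_mono) auto
  then show ?thesis
    using c by (simp add: eta2_def c_def[symmetric] field_simps)
qed

lemma eta_bounds:
  assumes s: "0 \<le> s" "s \<le> 1" and x: "1 \<le> x"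
  shows "0 \<le> eta x s \<and> eta x s \<le> (x\<^sup>2 - 1) / 2 * s\<^sup>2"
proof -
  have eta_1: "eta 1 s = 0"
    using s by (cases "s = 1") (auto simp: eta_def)
  have "eta 1 s \<le> eta x s"
    by (rule le_by_deriv_nonneg[where f'="\<lambda>y. eta1 y s"])
       (use x s in \<open>auto intro: eta_has_real_derivative dest: eta1_bounds\<close>)
  moreover have "- (eta 1 s - 1\<^sup>2 / 2 * s\<^sup>2) \<le> - (eta x s - x\<^sup>2 / 2 * s\<^sup>2)"
  proof (rule le_by_deriv_nonneg[where f="\<lambda>y. - (eta y s - y\<^sup>2 / 2 * s\<^sup>2)" and f'="\<lambda>y. y * s\<^sup>2 - eta1 y s"])
    fix y assume "1 \<le> y" "y \<le> x"
    then show "((\<lambda>y. - (eta y s - y\<^sup>2 / 2 * s\<^sup>2)) has_real_derivative y * s\<^sup>2 - eta1 y s) (at y)"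
      "0 \<le> y * s\<^sup>2 - eta1 y s"
      using s eta1_bounds[OF s, of y]
      by (auto intro!: derivative_eq_intros eta_has_real_derivative simp: power2_eq_square)
  qed (rule x)
  ultimately show ?thesis
    using eta_1 by (simp add: field_simps)
qed

lemma eta_pos:
  assumes s: "0 < s" "s \<le> 1" and x: "1 < x"
  shows "0 < eta x s"
proof -
  have "eta ((1 + x) / 2) s < eta x s"
  proof (rule DERIV_pos_imp_increasing[where f="\<lambda>x. eta x s"])
    fix y assume "(1 + x) / 2 \<le> y" "y \<le> x"
    then show "\<exists>d. ((\<lambda>x. eta x s) has_real_derivative d) (at y) \<and> 0 < d"
      using s x by (intro exI[of _ "eta1 y s"]) (auto intro!: eta_has_real_derivative eta1_pos)
  qed (use x in simp)
  moreover have "0 \<le> eta ((1 + x) / 2) s"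
    using s x eta_bounds[of s "(1 + x) / 2"] by auto
  ultimately show ?thesis by simp
qed

lemma eta_le: assumes "0 \<le> s" "s \<le> 1" "0 \<le> x" shows "eta x s \<le> x * s"
  using assms powr_le1[of x "1 - s"] by (auto simp: eta_def)

lemma eta_over_x_tendsto:
  assumes "0 \<le> s" "s \<le> 1"
  shows "((\<lambda>x. eta x s / x) \<longlongrightarrow> s) at_top"
proof -
  have inv: "((\<lambda>x::real. 1 / x) \<longlongrightarrow> 0) at_top"
    by (intro tendsto_divide_0[OF tendsto_const] filterlim_at_top_imp_at_infinity filterlim_ident)
  have "((\<lambda>x. (1 - s) powr x * (1 / x)) \<longlongrightarrow> 0) at_top"
  proof (rule Lim_null_comparison[OF _ inv])
    show "eventually (\<lambda>x. norm ((1 - s) powr x * (1 / x)) \<le> 1 / x) at_top"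
      using eventually_gt_at_top[of 0]
      by eventually_elim (use assms powr_le1[of _ "1 - s"] in \<open>auto simp: divide_right_mono\<close>)
  qed
  then have "((\<lambda>x. (1 - s) powr x * (1 / x) - 1 / x + s) \<longlongrightarrow> 0 - 0 + s) at_top"
    by (intro tendsto_intros inv)
  moreover have "eventually (\<lambda>x. (1 - s) powr x * (1 / x) - 1 / x + s = eta x s / x) at_top"
    using eventually_gt_at_top[of 0] by eventually_elim (auto simp: eta_def field_simps)
  ultimately show ?thesis
    by (simp add: Lim_transform_eventually)
qed

definition sqnorm :: "(nat \<Rightarrow> real) \<Rightarrow> real" where
  "sqnorm u = (\<Sum>i. (u i)\<^sup>2)"

definition Eta :: "real \<Rightarrow> (nat \<Rightarrow> real) \<Rightarrow> real" where
  "Eta x u = (\<Sum>i. eta x (u i))"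

definition Eta1 :: "real \<Rightarrow> (nat \<Rightarrow> real) \<Rightarrow> real" where
  "Eta1 x u = (\<Sum>i. eta1 x (u i))"

definition Eta2 :: "real \<Rightarrow> (nat \<Rightarrow> real) \<Rightarrow> real" where
  "Eta2 x u = (\<Sum>i. eta2 x (u i))"

lemma Delta_memberD:
  assumes "u \<in> Delta"
  shows "0 \<le> u i" "u i \<le> 1" "summable u" "summable (\<lambda>i. (u i)\<^sup>2)"
proof -
  show nonneg: "0 \<le> u j" for j
    using assms by (simp add: Delta_def)
  show "summable u"
    using assms by (simp add: Delta_def)
  then have le1: "u j \<le> 1" for j
    using assms sum_le_suminf[of u "{j}"] nonneg by (auto simp: Delta_def)
  then show "u i \<le> 1" .
  show "summable (\<lambda>i. (u i)\<^sup>2)"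
    by (rule summable_comparison_test[OF _ \<open>summable u\<close>])
       (use nonneg le1 in \<open>auto simp: power2_eq_square mult_left_le\<close>)
qed

lemma sqnorm_pos: assumes "u \<in> Delta" "u \<noteq> (\<lambda>_. 0)" shows "0 < sqnorm u"
proof -
  obtain i where "u i \<noteq> 0"
    using assms(2) by auto
  then show ?thesis
    unfolding sqnorm_def using Delta_memberD[OF assms(1)] by (intro suminf_pos2) auto
qed

lemma Delta_series_bounds:
  assumes u: "u \<in> Delta" and f: "\<And>s. 0 \<le> s \<Longrightarrow> s \<le> 1 \<Longrightarrow> 0 \<le> f s \<and> f s \<le> c * s\<^sup>2"
  shows "summable (\<lambda>i. f (u i))" "0 \<le> (\<Sum>i. f (u i))" "(\<Sum>i. f (u i)) \<le> c * sqnorm u"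
proof -
  note D = Delta_memberD[OF u]
  have sq: "summable (\<lambda>i. c * (u i)\<^sup>2)"
    using D(4) by (rule summable_mult)
  show sm: "summable (\<lambda>i. f (u i))"
    by (rule summable_comparison_test[OF _ sq]) (use f D in auto)
  show "0 \<le> (\<Sum>i. f (u i))"
    using f D by (intro suminf_nonneg sm) auto
  have "(\<Sum>i. f (u i)) \<le> (\<Sum>i. c * (u i)\<^sup>2)"
    using f D by (intro suminf_le sm sq) auto
  also have "\<dots> = c * sqnorm u"
    unfolding sqnorm_def using D(4) by (rule suminf_mult)
  finally show "(\<Sum>i. f (u i)) \<le> c * sqnorm u" .
qed

lemma Delta_series_has_real_derivative:
  assumes u: "u \<in> Delta" and "a < x0" "x0 < b"
    and deriv: "\<And>s x. 0 \<le> s \<Longrightarrow> s \<le> 1 \<Longrightarrow> a \<le> x \<Longrightarrow> x \<le> b \<Longrightarrow>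
      ((\<lambda>x. f x s) has_real_derivative f' x s) (at x)"
    and bound: "\<And>s x. 0 \<le> s \<Longrightarrow> s \<le> 1 \<Longrightarrow> a \<le> x \<Longrightarrow> x \<le> b \<Longrightarrow> \<bar>f' x s\<bar> \<le> c * s\<^sup>2"
    and summable: "summable (\<lambda>i. f x0 (u i))"
  shows "((\<lambda>x. \<Sum>i. f x (u i)) has_real_derivative (\<Sum>i. f' x0 (u i))) (at x0)"
proof (rule has_field_derivative_series'(2)[where S="{a..b}" and f="\<lambda>n x. f x (u n)"
      and f'="\<lambda>n x. f' x (u n)" and x0=x0 and x=x0])
  have u01: "0 \<le> u n" "u n \<le> 1" for n
    using Delta_memberD[OF u] by auto
  show "((\<lambda>x. f x (u n)) has_field_derivative f' x (u n)) (at x within {a..b})" if "x \<in> {a..b}" for n x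
    using that u01[of n] deriv[of "u n" x] by (simp add: has_field_derivative_at_within)
  show "uniformly_convergent_on {a..b} (\<lambda>n x. \<Sum>i<n. f' x (u i))"
  proof (rule Weierstrass_m_test'[where M="\<lambda>n. c * (u n)\<^sup>2"])
    show "norm (f' x (u n)) \<le> c * (u n)\<^sup>2" if "x \<in> {a..b}" for n x
      using that u01[of n] bound[of "u n" x] by simp
    show "summable (\<lambda>n. c * (u n)\<^sup>2)"
      using Delta_memberD(4)[OF u] by (rule summable_mult)
  qed
  show "convex {a..b}"
    by (rule convex_real_interval)
  show "x0 \<in> {a..b}" "x0 \<in> interior {a..b}"
    using assms(2,3) by auto
qed (rule summable)

lemma Eta_bounds:
  assumes "u \<in> Delta" "1 \<le> x"
  shows "summable (\<lambda>i. eta x (u i))" "0 \<le> Eta x u" "Eta x u \<le> (x\<^sup>2 - 1) / 2 * sqnorm u"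
  unfolding Eta_def using Delta_series_bounds[OF assms(1) eta_bounds[OF _ _ assms(2)]] by auto

lemma Eta1_bounds:
  assumes "u \<in> Delta" "1 \<le> x"
  shows "summable (\<lambda>i. eta1 x (u i))" "0 \<le> Eta1 x u" "Eta1 x u \<le> x * sqnorm u"
  unfolding Eta1_def using Delta_series_bounds[OF assms(1) eta1_bounds[OF _ _ assms(2)]] by auto

lemma Eta2_bounds:
  assumes "u \<in> Delta" "2 \<le> x"
  shows "0 \<le> Eta2 x u" "Eta2 x u \<le> sqnorm u"
  unfolding Eta2_def using Delta_series_bounds[OF assms(1), of "eta2 x" 1] eta2_bounds[OF _ _ assms(2)] by auto

lemma Eta_pos:
  assumes u: "u \<in> Delta" "u \<noteq> (\<lambda>_. 0)" and "1 < x"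
  shows "0 < Eta x u"
proof -
  obtain i where "u i \<noteq> 0"
    using u(2) by auto
  then have "0 < eta x (u i)"
    using Delta_memberD[OF u(1)] assms(3) by (intro eta_pos) (auto simp: order_le_less)
  then show ?thesis
    unfolding Eta_def using Eta_bounds(1)[OF u(1)] eta_bounds Delta_memberD[OF u(1)] assms(3)
    by (intro suminf_pos2) auto
qed

lemma Eta_has_real_derivative:
  assumes "u \<in> Delta" "1 < x0"
  shows "((\<lambda>x. Eta x u) has_real_derivative Eta1 x0 u) (at x0)"
  unfolding Eta_def Eta1_def
proof (rule Delta_series_has_real_derivative[OF assms(1), where a="(1 + x0) / 2" and b="x0 + 1" and c="x0 + 1"])
  fix s x :: real assume "0 \<le> s" "s \<le> 1" "(1 + x0) / 2 \<le> x" "x \<le> x0 + 1"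
  then show "((\<lambda>x. eta x s) has_real_derivative eta1 x s) (at x)" "\<bar>eta1 x s\<bar> \<le> (x0 + 1) * s\<^sup>2"
    using assms(2) eta1_bounds[of s x] mult_right_mono[of x "x0 + 1" "s\<^sup>2"]
    by (auto intro: eta_has_real_derivative)
qed (use assms Eta_bounds(1) in auto)

lemma Eta1_has_real_derivative:
  assumes "u \<in> Delta" "2 < x0"
  shows "((\<lambda>x. Eta1 x u) has_real_derivative Eta2 x0 u) (at x0)"
  unfolding Eta1_def Eta2_def
proof (rule Delta_series_has_real_derivative[OF assms(1), where a="(2 + x0) / 2" and b="x0 + 1" and c=1])
  fix s x :: real assume "0 \<le> s" "s \<le> 1" "(2 + x0) / 2 \<le> x" "x \<le> x0 + 1"
  then show "((\<lambda>x. eta1 x s) has_real_derivative eta2 x s) (at x)" "\<bar>eta2 x s\<bar> \<le> 1 * s\<^sup>2"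
    using assms(2) eta2_bounds[of s x] by (auto intro: eta1_has_real_derivative)
qed (use assms Eta1_bounds(1) in auto)

lemma Eta_le: assumes "u \<in> Delta" "1 \<le> x" shows "Eta x u \<le> x * suminf u"
proof -
  have "Eta x u \<le> (\<Sum>i. x * u i)"
    unfolding Eta_def
  proof (rule suminf_le)
    show "eta x (u i) \<le> x * u i" for i
      using Delta_memberD[OF assms(1)] assms(2) by (intro eta_le) auto
    show "summable (\<lambda>i. eta x (u i))"
      using assms by (rule Eta_bounds(1))
    show "summable (\<lambda>i. x * u i)"
      using Delta_memberD(3)[OF assms(1)] by (rule summable_mult)
  qed
  also have "\<dots> = x * suminf u"
    using Delta_memberD(3)[OF assms(1)] by (rule suminf_mult)
  finally show ?thesis .
qed

lemma Eta_over_x_tendsto: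
  assumes u: "u \<in> Delta"
  shows "((\<lambda>x. Eta x u / x) \<longlongrightarrow> suminf u) at_top"
proof -
  note D = Delta_memberD[OF u]
  have "((\<lambda>x. \<Sum>i. eta x (u i) / x) \<longlongrightarrow> (\<Sum>i. u i)) at_top"
  proof (rule tannerys_theorem[where M=u, THEN conjunct2, THEN conjunct2])
    show "((\<lambda>x. eta x (u i) / x) \<longlongrightarrow> u i) at_top" for i
      using D by (intro eta_over_x_tendsto)
    show "eventually (\<lambda>(i, x). norm (eta x (u i) / x) \<le> u i) (at_top \<times>\<^sub>F at_top)"
      using eventually_prodI[OF eventually_True eventually_ge_at_top[of 1]]
    proof (rule eventually_mono)
      fix p :: "nat \<times> real" assume "True \<and> 1 \<le> snd p"
      moreover obtain i x where p: "p = (i, x)" by (cases p)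
      ultimately have x: "1 \<le> x" by simp
      have "0 \<le> eta x (u i)" "eta x (u i) \<le> x * u i"
        using eta_bounds[of "u i" x] eta_le[of "u i" x] D x by auto
      with x show "case p of (i, x) \<Rightarrow> norm (eta x (u i) / x) \<le> u i"
        by (simp add: p divide_le_eq mult.commute)
    qed
    show "summable u"
      using D(3) .
  qed simp
  moreover have "eventually (\<lambda>x. (\<Sum>i. eta x (u i) / x) = Eta x u / x) at_top"
    using eventually_ge_at_top[of 1]
    by eventually_elim (use Eta_bounds(1)[OF u] in \<open>simp add: Eta_def suminf_divide\<close>)
  ultimately show ?thesis
    by (simp add: Lim_transform_eventually)
qed

lemma sqnorm_nonneg: "u \<in> Delta \<Longrightarrow> 0 \<le> sqnorm u"
  unfolding sqnorm_def using Delta_memberD(4) by (intro suminf_nonneg) auto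

lemma divide_sqnorm_bounds:
  assumes "u \<in> Delta" "0 \<le> Q" "Q \<le> c * sqnorm u" "0 \<le> c"
  shows "0 \<le> Q / sqnorm u" "Q / sqnorm u \<le> c" "norm (Q / sqnorm u) \<le> c"
proof -
  show q: "0 \<le> Q / sqnorm u" "Q / sqnorm u \<le> c"
    using assms sqnorm_nonneg[OF assms(1)] by (cases "sqnorm u = 0"; simp add: divide_le_eq)+
  show "norm (Q / sqnorm u) \<le> c"
    unfolding real_norm_def by (rule abs_leI) (use q in auto)
qed

locale Xi_measure =
  fixes Xi :: "(nat \<Rightarrow> real) measure"
  assumes finite_Xi: "finite_measure Xi"
    and sets_Xi: "sets Xi = sets Delta_M"
    and Xi_nonzero: "emeasure Xi (space Xi) \<noteq> 0"
begin

lemma space_Xi: "space Xi = Delta"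
  using sets_eq_imp_space_eq[OF sets_Xi] by (simp add: Delta_M_def space_restrict_space space_PiM)

lemma borel_measurable_coordinate: "(\<lambda>u. u i) \<in> borel_measurable Xi"
  unfolding measurable_cong_sets[OF sets_Xi refl] Delta_M_def
  by (intro measurable_restrict_space1) measurable

lemma borel_measurable_sqnorm: "sqnorm \<in> borel_measurable Xi"
  unfolding sqnorm_def using borel_measurable_coordinate by measurable

lemma borel_measurable_Eta:
  "Eta x \<in> borel_measurable Xi" "Eta1 x \<in> borel_measurable Xi" "Eta2 x \<in> borel_measurable Xi"
  unfolding Eta_def Eta1_def Eta2_def eta_def eta1_def eta2_def
  using borel_measurable_coordinate by measurable

text \<open>Since \<open>1 / 0 = 0\<close>, the density of \<open>nu Xi\<close> vanishes at \<open>0\<close> without a case distinction.\<close>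
lemma nu_eq_density: "nu Xi = density Xi (\<lambda>u. ennreal (1 / sqnorm u))"
  unfolding nu_def sqnorm_def by (rule arg_cong[where f="density Xi"]) auto

lemma integral_nu:
  assumes "f \<in> borel_measurable Xi"
  shows "(\<integral>u. f u \<partial>nu Xi) = (\<integral>u. f u / sqnorm u \<partial>Xi)"
  unfolding nu_eq_density using assms borel_measurable_sqnorm
  by (subst integral_density) (auto intro!: AE_I2 simp: sqnorm_nonneg space_Xi)

lemma integrable_nu_iff:
  assumes "f \<in> borel_measurable Xi"
  shows "integrable (nu Xi) f \<longleftrightarrow> integrable Xi (\<lambda>u. f u / sqnorm u)"
  unfolding nu_eq_density using assms borel_measurable_sqnorm
  by (subst integrable_density) (auto intro!: AE_I2 simp: sqnorm_nonneg space_Xi)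

lemma atom0_nonneg: "0 \<le> atom0 Xi"
  by (simp add: atom0_def)

lemma gamma_eq: "gamma Xi x = atom0 Xi * (x * (x - 1) / 2) + (\<integral>u. Eta x u / sqnorm u \<partial>Xi)"
  using integral_nu[OF borel_measurable_Eta(1)] by (simp add: gamma_def Eta_def eta_def)

lemma Eta_sqnorm_bounds:
  assumes "u \<in> Delta" "1 \<le> x"
  shows "0 \<le> Eta x u / sqnorm u" "Eta x u / sqnorm u \<le> (x\<^sup>2 - 1) / 2"
    "norm (Eta x u / sqnorm u) \<le> (x\<^sup>2 - 1) / 2"
  using divide_sqnorm_bounds[OF assms(1) Eta_bounds(2,3)[OF assms]] assms(2) by (auto simp: one_le_power)

lemma integrable_Eta_sqnorm:
  assumes "1 \<le> x" shows "integrable Xi (\<lambda>u. Eta x u / sqnorm u)"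
proof (rule finite_measure.integrable_const_bound[OF finite_Xi, where B="(x\<^sup>2 - 1) / 2"])
  show "AE u in Xi. norm (Eta x u / sqnorm u) \<le> (x\<^sup>2 - 1) / 2"
    using Eta_sqnorm_bounds(3)[OF _ assms] by (intro AE_I2) (simp add: space_Xi)
  show "(\<lambda>u. Eta x u / sqnorm u) \<in> borel_measurable Xi"
    using borel_measurable_Eta(1) borel_measurable_sqnorm by measurable
qed

lemma integral_pos_if_atom0_zero:
  fixes f :: "(nat \<Rightarrow> real) \<Rightarrow> real"
  assumes "atom0 Xi = 0" "integrable Xi f"
    and nonneg: "\<And>u. u \<in> Delta \<Longrightarrow> 0 \<le> f u"
    and pos: "\<And>u. u \<in> Delta \<Longrightarrow> u \<noteq> (\<lambda>_. 0) \<Longrightarrow> 0 < f u"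
  shows "0 < (\<integral>u. f u \<partial>Xi)"
proof -
  have zero: "{\<lambda>_. 0} \<in> sets Xi"
  proof -
    have "{u \<in> space Xi. \<forall>i. u i = 0} \<in> sets Xi"
      using borel_measurable_coordinate by measurable
    moreover have "{u \<in> space Xi. \<forall>i. u i = 0} = {\<lambda>_. 0}"
      by (auto simp: space_Xi Delta_def)
    ultimately show ?thesis by simp
  qed
  have "(\<integral>u. f u \<partial>Xi) \<noteq> 0"
  proof
    assume "(\<integral>u. f u \<partial>Xi) = 0"
    moreover have "AE u in Xi. 0 \<le> f u"
      using nonneg by (intro AE_I2) (auto simp: space_Xi)
    ultimately have "AE u in Xi. f u = 0"
      using integral_nonneg_eq_0_iff_AE[OF assms(2)] by blast
    then have "AE u in Xi. u \<in> {\<lambda>_. 0} \<longleftrightarrow> u \<in> space Xi"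
      using AE_space by eventually_elim (use pos in \<open>force simp: space_Xi\<close>)
    then have "emeasure Xi {\<lambda>_. 0} = emeasure Xi (space Xi)"
      using zero by (intro emeasure_eq_AE) auto
    moreover have "emeasure Xi {\<lambda>_. 0} = 0"
      using assms(1) finite_measure.emeasure_eq_measure[OF finite_Xi] by (simp add: atom0_def)
    ultimately show False
      using Xi_nonzero by simp
  qed
  moreover have "0 \<le> (\<integral>u. f u \<partial>Xi)"
    using nonneg by (intro integral_nonneg_AE AE_I2) (auto simp: space_Xi)
  ultimately show ?thesis by simp
qed

lemma gamma_pos: assumes "1 < x" shows "0 < gamma Xi x"
proof -
  have I: "0 \<le> (\<integral>u. Eta x u / sqnorm u \<partial>Xi)"
    using Eta_sqnorm_bounds assms by (intro integral_nonneg_AE AE_I2) (auto simp: space_Xi)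
  show ?thesis
  proof (cases "atom0 Xi = 0")
    case True
    have "0 < (\<integral>u. Eta x u / sqnorm u \<partial>Xi)"
      using True integrable_Eta_sqnorm Eta_sqnorm_bounds Eta_pos sqnorm_pos assms
      by (intro integral_pos_if_atom0_zero) auto
    then show ?thesis by (simp add: gamma_eq True)
  next
    case False
    then have "0 < atom0 Xi * (x * (x - 1) / 2)"
      using atom0_nonneg assms by simp
    then show ?thesis using I by (simp add: gamma_eq)
  qed
qed

lemma gamma_le_near_1:
  assumes "1 < x" "x \<le> 2"
  shows "gamma Xi x \<le> (atom0 Xi + 3 / 2 * measure Xi (space Xi)) * (x - 1)"
proof -
  have "Eta x u / sqnorm u \<le> 3 / 2 * (x - 1)" if "u \<in> Delta" for u
  proof -
    have "(x\<^sup>2 - 1) / 2 = (x - 1) * (x + 1) / 2"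
      by (simp add: power2_eq_square algebra_simps)
    also have "\<dots> \<le> (x - 1) * 3 / 2"
      using assms by (intro divide_right_mono mult_left_mono) auto
    finally show ?thesis
      using Eta_sqnorm_bounds(2)[OF that, of x] assms by linarith
  qed
  then have "(\<integral>u. Eta x u / sqnorm u \<partial>Xi) \<le> (\<integral>u. 3 / 2 * (x - 1) \<partial>Xi)"
    using assms integrable_Eta_sqnorm finite_measure.integrable_const[OF finite_Xi]
    by (intro integral_mono) (auto simp: space_Xi)
  also have "\<dots> = 3 / 2 * measure Xi (space Xi) * (x - 1)"
    by simp
  finally have "(\<integral>u. Eta x u / sqnorm u \<partial>Xi) \<le> 3 / 2 * measure Xi (space Xi) * (x - 1)" .
  moreover have "x / 2 * (x - 1) \<le> 1 * (x - 1)"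
    using assms by (intro mult_right_mono) auto
  then have "atom0 Xi * (x * (x - 1) / 2) \<le> atom0 Xi * (x - 1)"
    using atom0_nonneg by (intro mult_left_mono) auto
  ultimately show ?thesis
    unfolding gamma_eq distrib_right by linarith
qed

definition gamma1 :: "real \<Rightarrow> real" where
  "gamma1 x = atom0 Xi * (x - 1 / 2) + (\<integral>u. Eta1 x u / sqnorm u \<partial>Xi)"

definition gamma2 :: "real \<Rightarrow> real" where
  "gamma2 x = atom0 Xi + (\<integral>u. Eta2 x u / sqnorm u \<partial>Xi)"

lemma gamma_has_real_derivative:
  assumes "1 < x0" shows "(gamma Xi has_real_derivative gamma1 x0) (at x0)"
proof -
  have "((\<lambda>x. \<integral>u. Eta x u / sqnorm u \<partial>Xi) has_real_derivative (\<integral>u. Eta1 x0 u / sqnorm u \<partial>Xi)) (at x0)"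
  proof (rule has_real_derivative_integral[OF finite_Xi, where a=1 and b="x0 + 1" and B="x0 + 1"])
    fix u x assume u: "u \<in> space Xi" and x: "1 < x" "x < x0 + 1"
    show "((\<lambda>x. Eta x u / sqnorm u) has_real_derivative Eta1 x u / sqnorm u) (at x)"
      using u x by (auto intro!: DERIV_cdivide Eta_has_real_derivative simp: space_Xi)
    have "norm (Eta1 x u / sqnorm u) \<le> x"
      using u x Eta1_bounds(2,3)[of u x] by (intro divide_sqnorm_bounds) (auto simp: space_Xi)
    then show "\<bar>Eta1 x u / sqnorm u\<bar> \<le> x0 + 1"
      using x by simp
  qed (use assms borel_measurable_Eta borel_measurable_sqnorm integrable_Eta_sqnorm in auto)
  then show ?thesis
    unfolding gamma_eq[abs_def] gamma1_def
    by (auto intro!: derivative_eq_intros simp: field_simps)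
qed

lemma gamma1_has_real_derivative:
  assumes "2 < x0" shows "(gamma1 has_real_derivative gamma2 x0) (at x0)"
proof -
  have bounds1: "norm (Eta1 x u / sqnorm u) \<le> x" if "u \<in> space Xi" "1 \<le> x" for u x
    using that Eta1_bounds(2,3)[of u x] by (intro divide_sqnorm_bounds) (auto simp: space_Xi)
  have "((\<lambda>x. \<integral>u. Eta1 x u / sqnorm u \<partial>Xi) has_real_derivative (\<integral>u. Eta2 x0 u / sqnorm u \<partial>Xi)) (at x0)"
  proof (rule has_real_derivative_integral[OF finite_Xi, where a=2 and b="x0 + 1" and B=1])
    fix u x assume u: "u \<in> space Xi" and x: "2 < x" "x < x0 + 1"
    show "((\<lambda>x. Eta1 x u / sqnorm u) has_real_derivative Eta2 x u / sqnorm u) (at x)"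
      using u x by (auto intro!: DERIV_cdivide Eta1_has_real_derivative simp: space_Xi)
    have "norm (Eta2 x u / sqnorm u) \<le> 1"
      using u x Eta2_bounds[of u x] by (intro divide_sqnorm_bounds) (auto simp: space_Xi)
    then show "\<bar>Eta2 x u / sqnorm u\<bar> \<le> 1"
      by simp
  next
    fix x :: real assume "2 < x"
    then show "integrable Xi (\<lambda>u. Eta1 x u / sqnorm u)"
      using bounds1 borel_measurable_Eta(2) borel_measurable_sqnorm
      by (intro finite_measure.integrable_const_bound[OF finite_Xi, where B=x] AE_I2)
         (use \<open>2 < x\<close> in auto)
  qed (use assms borel_measurable_Eta borel_measurable_sqnorm in auto)
  then show ?thesis
    unfolding gamma1_def gamma2_def by (auto intro!: derivative_eq_intros)
qed

lemma deriv_deriv_gamma: assumes "2 < x" shows "deriv (deriv (gamma Xi)) x = gamma2 x"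
proof -
  have "(deriv (gamma Xi) has_real_derivative gamma2 x) (at x)"
  proof (rule has_field_derivative_transform_within_open[where S="{1<..}"])
    show "(gamma1 has_real_derivative gamma2 x) (at x)"
      using assms by (rule gamma1_has_real_derivative)
    show "gamma1 y = deriv (gamma Xi) y" if "y \<in> {1<..}" for y
      using that gamma_has_real_derivative[of y] by (auto intro!: DERIV_imp_deriv[symmetric])
  qed (use assms in auto)
  then show ?thesis
    by (rule DERIV_imp_deriv)
qed

lemma borel_measurable_suminf: "suminf \<in> borel_measurable Xi"
  using borel_measurable_coordinate by measurable

lemma integrable_suminf_sqnorm:
  assumes "integrable (nu Xi) suminf"
  shows "integrable Xi (\<lambda>u. suminf u / sqnorm u)"
  using assms by (simp add: integrable_nu_iff[OF borel_measurable_suminf])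

lemma integral_suminf_nu_pos:
  assumes "atom0 Xi = 0" "integrable (nu Xi) suminf"
  shows "0 < (\<integral>u. suminf u \<partial>nu Xi)"
proof -
  have "0 < (\<integral>u. suminf u / sqnorm u \<partial>Xi)"
  proof (rule integral_pos_if_atom0_zero[OF assms(1) integrable_suminf_sqnorm[OF assms(2)]])
    fix u assume u: "u \<in> Delta"
    then show "0 \<le> suminf u / sqnorm u"
      using Delta_memberD[OF u] sqnorm_nonneg[OF u] by (simp add: suminf_nonneg)
    assume "u \<noteq> (\<lambda>_. 0)"
    then obtain i where "u i \<noteq> 0" by auto
    then have "0 < suminf u"
      using Delta_memberD[OF u] by (intro suminf_pos2[of _ i]) (auto simp: order_le_less)
    then show "0 < suminf u / sqnorm u"
      using sqnorm_pos[OF u \<open>u \<noteq> (\<lambda>_. 0)\<close>] by simp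
  qed
  then show ?thesis
    by (simp add: integral_nu[OF borel_measurable_suminf])
qed

lemma Eta_over_x_sqnorm_le:
  assumes u: "u \<in> Delta" and x: "1 \<le> x"
  shows "norm (Eta x u / sqnorm u / x) \<le> suminf u / sqnorm u"
proof -
  have "0 \<le> Eta x u / x" "Eta x u / x \<le> suminf u"
    using Eta_le[OF u x] Eta_bounds(2)[OF u x] x by (auto simp: divide_le_eq mult.commute)
  then have "0 \<le> Eta x u / x / sqnorm u" "Eta x u / x / sqnorm u \<le> suminf u / sqnorm u"
    using sqnorm_nonneg[OF u] by (auto intro: divide_nonneg_nonneg simp del: divide_divide_eq_left
      elim!: divide_right_mono)
  then show ?thesis
    unfolding real_norm_def by (intro abs_leI) (auto simp: mult.commute)
qed

lemma gamma_over_x_tendsto: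
  assumes "atom0 Xi = 0" "integrable (nu Xi) suminf"
  shows "((\<lambda>x. gamma Xi x / x) \<longlongrightarrow> (\<integral>u. suminf u \<partial>nu Xi)) at_top"
proof -
  have "((\<lambda>x. \<integral>u. Eta x u / sqnorm u / x \<partial>Xi) \<longlongrightarrow> (\<integral>u. suminf u / sqnorm u \<partial>Xi)) at_top"
  proof (rule integral_dominated_convergence_at_top[OF _ _ integrable_suminf_sqnorm[OF assms(2)]])
    show "(\<lambda>u. suminf u / sqnorm u) \<in> borel_measurable Xi"
      using borel_measurable_suminf borel_measurable_sqnorm by measurable
    show "(\<lambda>u. Eta x u / sqnorm u / x) \<in> borel_measurable Xi" for x
      using borel_measurable_Eta(1) borel_measurable_sqnorm by measurable
    show "AE u in Xi. ((\<lambda>x. Eta x u / sqnorm u / x) \<longlongrightarrow> suminf u / sqnorm u) at_top"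
    proof (rule AE_I2)
      fix u assume "u \<in> space Xi"
      then have "((\<lambda>x. Eta x u / x * inverse (sqnorm u)) \<longlongrightarrow> suminf u * inverse (sqnorm u)) at_top"
        by (intro tendsto_mult_right Eta_over_x_tendsto) (simp add: space_Xi)
      then show "((\<lambda>x. Eta x u / sqnorm u / x) \<longlongrightarrow> suminf u / sqnorm u) at_top"
        by (simp add: divide_inverse mult_ac)
    qed
    show "eventually (\<lambda>x. AE u in Xi. norm (Eta x u / sqnorm u / x) \<le> suminf u / sqnorm u) at_top"
      using eventually_ge_at_top[of 1]
      by eventually_elim (use Eta_over_x_sqnorm_le in \<open>auto intro!: AE_I2 simp: space_Xi simp del: norm_divide\<close>)
  qed
  moreover have "(\<integral>u. Eta x u / sqnorm u / x \<partial>Xi) = gamma Xi x / x" for x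
    using integral_divide_zero[of Xi "\<lambda>u. Eta x u / sqnorm u" x] by (simp add: gamma_eq assms(1))
  ultimately show ?thesis
    by (simp add: integral_nu[OF borel_measurable_suminf])
qed

lemma flow_rate_gamma: "flow_rate (gamma Xi) (atom0 Xi + 3 / 2 * measure Xi (space Xi))"
  using gamma_pos gamma_le_near_1 gamma_has_real_derivative
  by unfold_locales (auto intro: DERIV_isCont)

lemma flow_rate_C2_gamma:
  assumes "((\<lambda>x. x * deriv (deriv (gamma Xi)) x) \<longlongrightarrow> \<kappa>) at_top"
  shows "flow_rate_C2 (gamma Xi) (atom0 Xi + 3 / 2 * measure Xi (space Xi)) gamma1 gamma2 \<kappa>"
proof (intro flow_rate_C2.intro flow_rate_gamma flow_rate_C2_axioms.intro)
  show "eventually (\<lambda>x. (gamma Xi has_real_derivative gamma1 x) (at x)) at_top"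
    using eventually_gt_at_top[of 1] by eventually_elim (rule gamma_has_real_derivative)
  show "eventually (\<lambda>x. (gamma1 has_real_derivative gamma2 x) (at x)) at_top"
    using eventually_gt_at_top[of 2] by eventually_elim (rule gamma1_has_real_derivative)
  have "eventually (\<lambda>x. x * deriv (deriv (gamma Xi)) x = x * gamma2 x) at_top"
    using eventually_gt_at_top[of 2] by eventually_elim (simp add: deriv_deriv_gamma)
  with assms show "((\<lambda>x. x * gamma2 x) \<longlongrightarrow> \<kappa>) at_top"
    by (rule Lim_transform_eventually)
qed

end

theorem mainTheorem5:
  fixes Xi :: "(nat \<Rightarrow> real) measure"
  assumes "finite_measure Xi"
    and "sets Xi = sets Delta_M"
    and "emeasure Xi (space Xi) \<noteq> 0"
  shows
    "(atom0 Xi = 0 \<and> integrable (nu Xi) (\<lambda>u. suminf u) \<longrightarrow>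
        (\<forall>t\<ge>0. (\<lambda>x. vfun Xi x t) \<sim>[at_top]
                  (\<lambda>x. x * exp (- (\<integral>u. suminf u \<partial>nu Xi) * t))))
   \<and> ((\<exists>c>1. (\<lambda>u. 1 / gamma Xi u) integrable_on {c..}) \<longrightarrow>
        (\<forall>t>0. (\<exists>!w. 1 < w \<and> (\<lambda>u. 1 / gamma Xi u) integrable_on {w..}
                      \<and> integral {w..} (\<lambda>u. 1 / gamma Xi u) = t)
             \<and> ((\<lambda>x. vfun Xi x t) \<longlongrightarrow>
                  (THE w. 1 < w \<and> (\<lambda>u. 1 / gamma Xi u) integrable_on {w..}
                      \<and> integral {w..} (\<lambda>u. 1 / gamma Xi u) = t)) at_top))
   \<and> (\<forall>\<kappa>::real. ((\<lambda>x. x * deriv (deriv (gamma Xi)) x) \<longlongrightarrow> \<kappa>) at_top \<longrightarrow>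
        (\<forall>t\<ge>0. \<exists>L::real \<Rightarrow> real. (\<forall>x\<ge>1. 0 < L x) \<and> slowly_varying L
              \<and> (\<forall>x\<ge>1. vfun Xi x t = x powr (exp (- \<kappa> * t)) * L x)))"
proof -
  interpret Xi: Xi_measure Xi
    using assms by (simp add: Xi_measure_def)
  interpret flow_rate "gamma Xi" "atom0 Xi + 3 / 2 * measure Xi (space Xi)"
    by (rule Xi.flow_rate_gamma)
  have h_eq: "(\<lambda>u. 1 / gamma Xi u) = h"
    by (simp add: fun_eq_iff h_def)
  have vfun_eq: "vfun Xi = flow"
    by (simp add: fun_eq_iff vfun_def flow_def h_eq)
  have slowly_varying_factor: "\<exists>L. (\<forall>x\<ge>1. 0 < L x) \<and> slowly_varying L \<and> (\<forall>x\<ge>1. flow x t = x powr exp (- \<kappa> * t) * L x)"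
    if "((\<lambda>x. x * deriv (deriv (gamma Xi)) x) \<longlongrightarrow> \<kappa>) at_top" "0 \<le> t" for \<kappa> t
    using flow_rate_C2.flow_eq_powr_slowly_varying[OF Xi.flow_rate_C2_gamma[OF that(1)] that(2)] .
  show ?thesis
    unfolding vfun_eq h_eq
  proof (intro conjI; intro impI allI)
    fix t :: real
    assume "atom0 Xi = 0 \<and> integrable (nu Xi) (\<lambda>u. suminf u)" "0 \<le> t"
    with Xi.gamma_over_x_tendsto Xi.integral_suminf_nu_pos show "(\<lambda>x. flow x t) \<sim>[at_top] (\<lambda>x. x * exp (- (\<integral>u. suminf u \<partial>nu Xi) * t))"
      by (intro flow_asymp_equiv_linear) auto
  qed (rule flow_tendsto_if_integrable slowly_varying_factor; assumption)+
qed

end
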